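(* Let $\delta,C>0$ with $C<\delta^2<\frac12$, and set $r(\delta)=\sqrt{(1-2\delta^2)/3}$ and $R(\delta)=\sqrt{\frac23(\delta^2-C)}$. Then for every $h>0$, $N\in\mathbb N$ and $f\in C_b^\infty(\mathbb R^N)$ with $\operatorname{supp}f\subset\Omega^0_N(R(\delta),r(\delta))$ we have $\mathcal E_{h,N}[f]\geq C\int_{\mathbb R^N}f^2e^{-V_N/(hN)}dx$.
   Context: Fix $\mu>1$. For $N\in\mathbb N$ let $V_N(x)=\sum_{k=1}^N\frac14(x_k^2-1)^2+\frac{\mu}{8\sin^2(\pi/N)}\sum_{k=1}^N(x_k-x_{k+1})^2$ on $\mathbb R^N$, with $x_{N+1}:=x_1$. $\overline x=\frac1N\sum_kx_k$. For $h>0$ and $f\in C_b^\infty(\mathbb R^N)$ (smooth, bounded with all derivatives), $\mathcal E_{h,N}[f]=hN\int|\nabla f|^2e^{-V_N/(hN)}dx$. For $R,r>0$, $\Omega^0_N(R,r)=\{x\in\mathbb R^N:\frac1N\sum_k(x_k-\overline x)^2\leq R^2,\ |\overline x|\leq r\}$. *)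

theory Defs
  imports "HOL-Analysis.Analysis"
begin

text \<open>Coordinates of R^N are indexed by a finite type 'n with CARD('n) = N.
  The cyclic order x_1, ..., x_N (with x_{N+1} = x_1) is the order of the
  list Enum.enum (class enum: a distinct list of all elements).\<close>

definition cyc_idx :: "'n::{finite,enum} \<Rightarrow> nat" where
  "cyc_idx i = (THE k. k < length (Enum.enum :: 'n list) \<and> (Enum.enum :: 'n list) ! k = i)"

definition cyc_succ :: "'n::{finite,enum} \<Rightarrow> 'n" where
  "cyc_succ i = (Enum.enum :: 'n list) ! ((cyc_idx i + 1) mod CARD('n))"

definition V :: "real \<Rightarrow> real^'n::{finite,enum} \<Rightarrow> real" where
  "V \<mu> x = (\<Sum>k\<in>UNIV. (1/4) * ((x$k)^2 - 1)^2)
      + \<mu> / (8 * (sin (pi / real CARD('n)))^2) * (\<Sum>k\<in>UNIV. (x$k - x$(cyc_succ k))^2)"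

definition mean :: "real^'n::finite \<Rightarrow> real" where
  "mean x = (\<Sum>k\<in>UNIV. x$k) / real CARD('n)"

definition Omega0 :: "real \<Rightarrow> real \<Rightarrow> (real^'n::finite) set" where
  "Omega0 R r = {x. (\<Sum>k\<in>UNIV. (x$k - mean x)^2) / real CARD('n) \<le> R^2 \<and> \<bar>mean x\<bar> \<le> r}"

definition pd :: "'n::finite \<Rightarrow> (real^'n \<Rightarrow> real) \<Rightarrow> real^'n \<Rightarrow> real" where
  "pd i f x = frechet_derivative f (at x) (axis i 1)"

fun Cb_k :: "nat \<Rightarrow> (real^'n::finite \<Rightarrow> real) \<Rightarrow> bool" where
  "Cb_k 0 f = (continuous_on UNIV f \<and> bounded (range f))"
| "Cb_k (Suc k) f = (continuous_on UNIV f \<and> bounded (range f) \<and> (\<forall>x. f differentiable (at x))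
      \<and> (\<forall>i. Cb_k k (pd i f)))"

definition Cb_inf :: "(real^'n::finite \<Rightarrow> real) \<Rightarrow> bool" where
  "Cb_inf f = (\<forall>k. Cb_k k f)"

definition grad_sq :: "(real^'n::finite \<Rightarrow> real) \<Rightarrow> real^'n \<Rightarrow> real" where
  "grad_sq f x = (\<Sum>i\<in>UNIV. (pd i f x)^2)"

definition energy :: "real \<Rightarrow> real \<Rightarrow> (real^'n::{finite,enum} \<Rightarrow> real) \<Rightarrow> real" where
  "energy \<mu> h f = h * real CARD('n) *
     (\<integral>x. grad_sq f x * exp (- V \<mu> x / (h * real CARD('n))) \<partial>lborel)"

end

theory Submission
  imports Defs
begin

text \<open>Integrate by parts along the diagonal direction \<open>u = (1, \<dots>, 1)\<close>.  The nearest-neighbour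
  coupling in \<open>V\<^sub>N\<close> is invariant under diagonal shifts, hence
  \<open>\<partial>\<^sub>u V\<^sub>N = a := \<Sum>(x\<^sub>k\<^sup>3 - x\<^sub>k)\<close> and \<open>\<partial>\<^sub>u a = b := 3|x|\<^sup>2 - N\<close>.  With the weight \<open>w = e\<^sup>-\<^sup>V\<^sup>/\<^sup>c\<close>,
  \<open>c = hN\<close>, the derivative \<open>\<partial>\<^sub>u (f\<^sup>2 a w)\<close> integrates to zero, and completing a square gives
  \<open>\<integral> (c (\<partial>\<^sub>u f)\<^sup>2 + b f\<^sup>2) w \<ge> 0\<close>.  On \<open>\<Omega>\<^sup>0\<^sub>N(R, r)\<close> we have \<open>|x|\<^sup>2 \<le> N (R\<^sup>2 + r\<^sup>2) = N (1 - 2C)/3\<close>,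
  so \<open>b \<le> -2NC\<close> on the support of \<open>f\<close>, while \<open>(\<partial>\<^sub>u f)\<^sup>2 \<le> N |\<nabla>f|\<^sup>2\<close> by Cauchy-Schwarz.\<close>

lemma lborel_integral_translate:
  fixes g :: "'a::euclidean_space \<Rightarrow> 'b::{banach, second_countable_topology}"
  assumes [measurable]: "g \<in> borel_measurable borel"
  shows integrable_lborel_translate: "integrable lborel (\<lambda>x. g (c + x)) \<longleftrightarrow> integrable lborel g"
    and integral_lborel_translate: "(\<integral>x. g (c + x) \<partial>lborel) = integral\<^sup>L lborel g"
proof -
  have shift: "(+) c \<in> measurable lborel borel"
    by simp
  show "integrable lborel (\<lambda>x. g (c + x)) \<longleftrightarrow> integrable lborel g"
    using integrable_distr_eq[OF shift, of g] by (simp add: lborel_distr_plus)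
  show "(\<integral>x. g (c + x) \<partial>lborel) = integral\<^sup>L lborel g"
    using integral_distr[OF shift, of g] by (simp add: lborel_distr_plus)
qed

lemma integrable_continuous_compact_support:
  fixes g :: "'a::euclidean_space \<Rightarrow> real"
  assumes "compact K" and "continuous_on UNIV g" and "\<And>x. x \<notin> K \<Longrightarrow> g x = 0"
  shows "integrable lborel g"
proof -
  have "integrable lborel (\<lambda>x. indicator K x *\<^sub>R g x)"
    using borel_integrable_compact assms(1,2) continuous_on_subset by blast
  also have "(\<lambda>x. indicator K x *\<^sub>R g x) = g"
    using assms(3) by (auto simp: indicator_def fun_eq_iff)
  finally show ?thesis .
qed

lemma continuous_compact_support_bounded:
  fixes g :: "'a::metric_space \<Rightarrow> real"
  assumes "compact K" and "continuous_on UNIV g" and "\<And>x. x \<notin> K \<Longrightarrow> g x = 0"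
  obtains M where "\<And>x. \<bar>g x\<bar> \<le> M"
proof -
  have "bounded (g ` K)"
    using assms(1,2) compact_continuous_image compact_imp_bounded continuous_on_subset subset_UNIV
    by metis
  then obtain M where "\<forall>y\<in>g ` K. norm y \<le> M"
    unfolding bounded_iff by blast
  then have "\<bar>g x\<bar> \<le> max M 0" for x
    using assms(3)[of x] by (cases "x \<in> K") auto
  then show thesis
    using that by blast
qed

lemma difference_quotient_integral_eq_0:
  fixes G :: "'a::euclidean_space \<Rightarrow> real"
  assumes [measurable]: "G \<in> borel_measurable borel" and "integrable lborel G"
  shows "(\<integral>x. (G (x + t *\<^sub>R u) - G x) / t \<partial>lborel) = 0"
proof -
  have "integrable lborel (\<lambda>x. G (t *\<^sub>R u + x))"
    using assms by (simp add: integrable_lborel_translate)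
  then have "(\<integral>x. G (t *\<^sub>R u + x) - G x \<partial>lborel) = 0"
    using assms by (simp add: integral_lborel_translate)
  then show ?thesis
    by (simp add: add.commute)
qed

lemma difference_quotient_bounded:
  fixes G DG :: "'a::euclidean_space \<Rightarrow> real"
  assumes "K \<subseteq> cball 0 \<rho>" and "\<And>x. x \<notin> K \<Longrightarrow> G x = 0" and "\<And>x. \<bar>DG x\<bar> \<le> M"
    and "\<And>x s. ((\<lambda>s. G (x + s *\<^sub>R u)) has_real_derivative DG (x + s *\<^sub>R u)) (at s)"
    and "0 < t" "t \<le> 1"
  shows "\<bar>(G (x + t *\<^sub>R u) - G x) / t\<bar> \<le> M * indicator (cball 0 (\<rho> + norm u)) x"
proof (cases "norm x \<le> \<rho> + norm u")
  case True
  obtain z where "G (x + t *\<^sub>R u) - G (x + 0 *\<^sub>R u) = (t - 0) * DG (x + z *\<^sub>R u)"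
    using MVT2[OF \<open>0 < t\<close> assms(4)] by blast
  then show ?thesis
    using True assms(3)[of "x + z *\<^sub>R u"] \<open>0 < t\<close> by simp
next
  case False
  have "norm (t *\<^sub>R u) \<le> norm u"
    using \<open>0 < t\<close> \<open>t \<le> 1\<close> by (simp add: mult_left_le_one_le)
  moreover have "norm x - norm (t *\<^sub>R u) \<le> norm (x + t *\<^sub>R u)"
    using norm_triangle_ineq2[of x "- (t *\<^sub>R u)"] by simp
  ultimately have "\<rho> < norm (x + t *\<^sub>R u)" "\<rho> < norm x"
    using False norm_ge_zero[of u] by linarith+
  then have "x + t *\<^sub>R u \<notin> K" "x \<notin> K"
    using assms(1) by auto
  then show ?thesis
    using False assms(2) by simp
qed

text \<open>The difference quotients of \<open>G\<close> along \<open>u\<close> integrate to zero by translation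
  invariance of Lebesgue measure, and converge to \<open>DG\<close> dominatedly by the mean value theorem.\<close>
lemma integral_directional_derivative_eq_0:
  fixes G DG :: "'a::euclidean_space \<Rightarrow> real"
  assumes "compact K" and "continuous_on UNIV G" and "continuous_on UNIV DG"
    and G0: "\<And>x. x \<notin> K \<Longrightarrow> G x = 0" and DG0: "\<And>x. x \<notin> K \<Longrightarrow> DG x = 0"
    and der: "\<And>x s. ((\<lambda>s. G (x + s *\<^sub>R u)) has_real_derivative DG (x + s *\<^sub>R u)) (at s)"
  shows "integral\<^sup>L lborel DG = 0"
proof -
  have [measurable]: "G \<in> borel_measurable borel" "DG \<in> borel_measurable borel"
    using assms(2,3) by (simp_all add: borel_measurable_continuous_onI)
  obtain \<rho> where "\<forall>x\<in>K. norm x \<le> \<rho>"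
    using compact_imp_bounded[OF \<open>compact K\<close>] unfolding bounded_iff by blast
  then have \<rho>: "K \<subseteq> cball 0 \<rho>"
    by auto
  obtain M where M: "\<And>x. \<bar>DG x\<bar> \<le> M"
    using continuous_compact_support_bounded[OF assms(1,3) DG0] by blast
  define t where "t n = 1 / real (Suc n)" for n
  have t: "0 < t n" "t n \<le> 1" for n
    by (simp_all add: t_def)
  have t_lim: "filterlim t (at 0) sequentially"
  proof (rule tendsto_imp_filterlim_at_right[THEN filterlim_mono])
    show "t \<longlonglongrightarrow> 0"
      unfolding t_def using LIMSEQ_inverse_real_of_nat by (simp add: inverse_eq_divide)
    show "\<forall>\<^sub>F n in sequentially. 0 < t n"
      using t by simp
  qed (simp_all add: at_le)
  have "(\<lambda>n. (G (x + t n *\<^sub>R u) - G x) / t n) \<longlonglongrightarrow> DG x" for x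
    using filterlim_compose[OF der[of x 0, unfolded DERIV_def] t_lim] by simp
  then have "(\<lambda>n. \<integral>x. (G (x + t n *\<^sub>R u) - G x) / t n \<partial>lborel) \<longlonglongrightarrow> integral\<^sup>L lborel DG"
    using difference_quotient_bounded[OF \<rho> G0 M der t]
    by (intro integral_dominated_convergence[where w="\<lambda>x. M * indicator (cball 0 (\<rho> + norm u)) x"])
      (auto intro!: integrable_real_indicator emeasure_bounded_finite)
  moreover have "(\<lambda>n. \<integral>x. (G (x + t n *\<^sub>R u) - G x) / t n \<partial>lborel) = (\<lambda>n. 0)"
    using integrable_continuous_compact_support[OF assms(1,2) G0]
    by (intro ext difference_quotient_integral_eq_0) simp_all
  ultimately show ?thesis
    by (metis LIMSEQ_const_iff)
qed

lemma has_real_derivative_along_line: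
  fixes f :: "'a::real_normed_vector \<Rightarrow> real"
  assumes "f differentiable (at (x + s *\<^sub>R u))"
  shows "((\<lambda>s. f (x + s *\<^sub>R u)) has_real_derivative frechet_derivative f (at (x + s *\<^sub>R u)) u) (at s)"
proof -
  let ?f' = "frechet_derivative f (at (x + s *\<^sub>R u))"
  have "(f has_derivative ?f') (at (x + s *\<^sub>R u))"
    using assms frechet_derivative_works by blast
  moreover have "((\<lambda>s. x + s *\<^sub>R u) has_derivative (\<lambda>t. t *\<^sub>R u)) (at s)"
    by (auto intro!: derivative_eq_intros)
  ultimately have "((\<lambda>s. f (x + s *\<^sub>R u)) has_derivative (\<lambda>t. ?f' (t *\<^sub>R u))) (at s)"
    using diff_chain_at by (fastforce simp: o_def)
  moreover have "(\<lambda>t. ?f' (t *\<^sub>R u)) = (*) (?f' u)"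
    using \<open>(f has_derivative ?f') _\<close> has_derivative_linear
    by (fastforce simp: fun_eq_iff real_vector.linear_scale)
  ultimately show ?thesis
    by (simp add: has_field_derivative_def)
qed

lemma frechet_derivative_eq_0_outside_closure_support:
  fixes f :: "'a::real_normed_vector \<Rightarrow> real"
  assumes "f differentiable (at x)" and "x \<notin> closure {x. f x \<noteq> 0}"
  shows "frechet_derivative f (at x) = (\<lambda>_. 0)"
proof -
  have "(f has_derivative frechet_derivative f (at x)) (at x)"
    using assms(1) frechet_derivative_works by blast
  then have "((\<lambda>_. 0) has_derivative frechet_derivative f (at x)) (at x)"
    by (rule has_derivative_transform_within_open[where s="- closure {x. f x \<noteq> 0}"])
      (use assms(2) in auto, meson closure_subset mem_Collect_eq subsetD)
  then show ?thesis
    using has_derivative_unique has_derivative_const by blast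
qed

text \<open>Integrating the derivative of \<open>f\<^sup>2 a e\<^sup>-\<^sup>V\<^sup>/\<^sup>c\<close> along \<open>u\<close> gives zero, and that
  derivative is \<open>(c (Df)\<^sup>2 + b f\<^sup>2) e\<^sup>-\<^sup>V\<^sup>/\<^sup>c\<close> minus the square \<open>(c Df - a f)\<^sup>2 e\<^sup>-\<^sup>V\<^sup>/\<^sup>c / c\<close>.\<close>
lemma integral_directional_energy_nonneg:
  fixes f Df V a b :: "'a::euclidean_space \<Rightarrow> real"
  assumes "c > 0" and "compact K"
    and f0: "\<And>x. x \<notin> K \<Longrightarrow> f x = 0" and Df0: "\<And>x. x \<notin> K \<Longrightarrow> Df x = 0"
    and cont: "continuous_on UNIV f" "continuous_on UNIV Df" "continuous_on UNIV V"
      "continuous_on UNIV a" "continuous_on UNIV b"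
    and df: "\<And>x s. ((\<lambda>s. f (x + s *\<^sub>R u)) has_real_derivative Df (x + s *\<^sub>R u)) (at s)"
    and dV: "\<And>x s. ((\<lambda>s. V (x + s *\<^sub>R u)) has_real_derivative a (x + s *\<^sub>R u)) (at s)"
    and da: "\<And>x s. ((\<lambda>s. a (x + s *\<^sub>R u)) has_real_derivative b (x + s *\<^sub>R u)) (at s)"
  shows "0 \<le> (\<integral>x. (c * (Df x)\<^sup>2 + b x * (f x)\<^sup>2) * exp (- V x / c) \<partial>lborel)"
proof -
  define w where "w x = exp (- V x / c)" for x
  define G where "G x = (f x)\<^sup>2 * a x * w x" for x
  define DG where "DG x = (2 * f x * Df x * a x + (f x)\<^sup>2 * b x - (f x)\<^sup>2 * (a x)\<^sup>2 / c) * w x" for x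
  have cw: "continuous_on UNIV w"
    unfolding w_def using \<open>c > 0\<close> by (auto intro!: continuous_intros cont)
  have dw: "((\<lambda>s. w (x + s *\<^sub>R u)) has_real_derivative - a (x + s *\<^sub>R u) / c * w (x + s *\<^sub>R u)) (at s)"
    for x s
    unfolding w_def using dV \<open>c > 0\<close> by (auto intro!: derivative_eq_intros)
  have dG: "((\<lambda>s. G (x + s *\<^sub>R u)) has_real_derivative DG (x + s *\<^sub>R u)) (at s)" for x s
    using \<open>c > 0\<close> unfolding G_def
    by (auto intro!: derivative_eq_intros df da dw simp: DG_def field_simps power2_eq_square)
  have cDG: "continuous_on UNIV DG"
    unfolding DG_def by (intro continuous_intros cont cw) (use \<open>c > 0\<close> in simp)
  have DG0: "DG x = 0" if "x \<notin> K" for x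
    using f0[OF that] by (simp add: DG_def)
  have "integral\<^sup>L lborel DG = 0"
  proof (rule integral_directional_derivative_eq_0[OF \<open>compact K\<close> _ cDG _ DG0 dG])
    show "continuous_on UNIV G"
      unfolding G_def by (intro continuous_intros cont cw)
    show "G x = 0" if "x \<notin> K" for x
      using f0[OF that] by (simp add: G_def)
  qed
  moreover have "integral\<^sup>L lborel DG \<le> (\<integral>x. (c * (Df x)\<^sup>2 + b x * (f x)\<^sup>2) * w x \<partial>lborel)"
  proof (rule integral_mono)
    show "integrable lborel DG"
      using integrable_continuous_compact_support[OF \<open>compact K\<close> cDG DG0] .
    show "integrable lborel (\<lambda>x. (c * (Df x)\<^sup>2 + b x * (f x)\<^sup>2) * w x)"
    proof (rule integrable_continuous_compact_support[OF \<open>compact K\<close>])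
      show "continuous_on UNIV (\<lambda>x. (c * (Df x)\<^sup>2 + b x * (f x)\<^sup>2) * w x)"
        by (auto intro!: continuous_intros cont cw)
    qed (simp add: f0 Df0)
    fix x
    have "(c * (Df x)\<^sup>2 + b x * (f x)\<^sup>2) * w x - DG x = (c * Df x - a x * f x)\<^sup>2 * w x / c"
      using \<open>c > 0\<close> by (simp add: DG_def field_simps power2_eq_square)
    also have "\<dots> \<ge> 0"
      using \<open>c > 0\<close> by (simp add: w_def)
    finally show "DG x \<le> (c * (Df x)\<^sup>2 + b x * (f x)\<^sup>2) * w x"
      by simp
  qed
  ultimately show ?thesis
    by (simp add: w_def)
qed

text \<open>For \<open>N = 1\<close> the coupling coefficient is \<open>\<mu> / 0 = 0\<close>; it is treated as an opaque constant.\<close>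
lemma continuous_on_V: "continuous_on UNIV (V \<mu> :: real^'n::{finite,enum} \<Rightarrow> real)"
  unfolding V_def by (intro continuous_on_add continuous_on_mult_left continuous_intros)

lemma V_has_derivative_along_diagonal:
  fixes x :: "real^'n::{finite,enum}"
  shows "((\<lambda>s. V \<mu> (x + s *\<^sub>R 1)) has_real_derivative
           (\<Sum>k\<in>UNIV. ((x + s *\<^sub>R 1)$k)^3 - (x + s *\<^sub>R 1)$k)) (at s)"
proof -
  have "V \<mu> (x + s *\<^sub>R 1) = (\<Sum>k\<in>UNIV. (1/4) * ((x$k + s)^2 - 1)^2)
      + \<mu> / (8 * (sin (pi / real CARD('n)))^2) * (\<Sum>k\<in>UNIV. (x$k - x$(cyc_succ k))^2)" for s
    by (simp add: V_def)
  moreover have "((\<lambda>s. (\<Sum>k\<in>UNIV. (1/4) * ((x$k + s)^2 - 1)^2)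
      + \<mu> / (8 * (sin (pi / real CARD('n)))^2) * (\<Sum>k\<in>UNIV. (x$k - x$(cyc_succ k))^2))
      has_real_derivative (\<Sum>k\<in>UNIV. ((x + s *\<^sub>R 1)$k)^3 - (x + s *\<^sub>R 1)$k)) (at s)"
    by (auto intro!: derivative_eq_intros sum.cong simp: algebra_simps power2_eq_square power3_eq_cube)
  ultimately show ?thesis
    by simp
qed

lemma sum_cube_minus_has_derivative_along_diagonal:
  fixes x :: "real^'n::finite"
  shows "((\<lambda>s. \<Sum>k\<in>UNIV. ((x + s *\<^sub>R 1)$k)^3 - (x + s *\<^sub>R 1)$k) has_real_derivative
           (\<Sum>k\<in>UNIV. 3 * ((x + s *\<^sub>R 1)$k)^2 - 1)) (at s)"
  by (auto intro!: derivative_eq_intros sum.cong simp: algebra_simps power2_eq_square power3_eq_cube)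

lemma sum_sq_le_of_mem_Omega0:
  fixes x :: "real^'n::finite"
  assumes "x \<in> Omega0 R r"
  shows "(\<Sum>k\<in>UNIV. (x$k)^2) \<le> real CARD('n) * (R^2 + r^2)"
proof -
  define N where "N = real CARD('n)"
  have "N > 0"
    by (simp add: N_def)
  have sum_eq: "(\<Sum>k\<in>UNIV. x$k) = N * mean x"
    using \<open>N > 0\<close> by (simp add: mean_def N_def)
  have "(\<Sum>k\<in>UNIV. (x$k - mean x)^2) = (\<Sum>k\<in>UNIV. (x$k)^2) - N * (mean x)^2"
    by (simp add: power2_diff sum.distrib sum_subtractf sum_distrib_left[symmetric]
        sum_distrib_right[symmetric] sum_eq N_def power2_eq_square algebra_simps)
  moreover have "(\<Sum>k\<in>UNIV. (x$k - mean x)^2) \<le> N * R^2"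
    using assms \<open>N > 0\<close> by (simp add: Omega0_def N_def divide_le_eq mult.commute)
  moreover have "\<bar>mean x\<bar> \<le> r"
    using assms by (simp add: Omega0_def)
  then have "(mean x)^2 \<le> r^2"
    by (metis abs_ge_zero power2_abs power_mono)
  then have "N * (mean x)^2 \<le> N * r^2"
    using \<open>N > 0\<close> by simp
  ultimately show ?thesis
    unfolding N_def[symmetric] distrib_left by linarith
qed

lemma bounded_Omega0: "bounded (Omega0 R r :: (real^'n::finite) set)"
proof -
  have "norm x \<le> sqrt (real CARD('n) * (R^2 + r^2))" if "x \<in> Omega0 R r" for x :: "real^'n"
    using sum_sq_le_of_mem_Omega0[OF that] by (simp add: norm_vec_def L2_set_def)
  then show ?thesis
    unfolding bounded_iff by blast
qed

lemma sum_sq_le_of_mem_Omega0_R_r: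
  fixes x :: "real^'n::finite"
  assumes "C < \<delta>^2" and "\<delta>^2 < 1/2"
    and "x \<in> Omega0 (sqrt (2/3 * (\<delta>^2 - C))) (sqrt ((1 - 2 * \<delta>^2) / 3))"
  shows "3 * (\<Sum>k\<in>UNIV. (x$k)^2) \<le> real CARD('n) * (1 - 2 * C)"
proof -
  have radii: "(sqrt (2/3 * (\<delta>^2 - C)))^2 + (sqrt ((1 - 2 * \<delta>^2) / 3))^2 = (1 - 2 * C) / 3"
    using assms(1,2) by (simp add: field_simps)
  have "(\<Sum>k\<in>UNIV. (x$k)^2) \<le> real CARD('n) * ((1 - 2 * C) / 3)"
    using sum_sq_le_of_mem_Omega0[OF assms(3)] unfolding radii .
  then show ?thesis
    by simp
qed

lemma Cb_inf_imp_C1: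
  assumes "Cb_inf f"
  shows "continuous_on UNIV f" and "f differentiable (at x)" and "continuous_on UNIV (pd i f)"
  using assms unfolding Cb_inf_def by (metis Cb_k.simps numeral_2_eq_2)+

lemma pd_eq_0_outside_closure_support:
  assumes "Cb_inf f" and "x \<notin> closure {x. f x \<noteq> 0}"
  shows "pd i f x = 0"
  using frechet_derivative_eq_0_outside_closure_support[OF Cb_inf_imp_C1(2)[OF assms(1)] assms(2)]
  by (simp add: pd_def)

lemma frechet_derivative_1_eq_sum_pd:
  fixes f :: "real^'n::finite \<Rightarrow> real"
  assumes "f differentiable (at x)"
  shows "frechet_derivative f (at x) 1 = (\<Sum>i\<in>UNIV. pd i f x)"
proof -
  have "linear (frechet_derivative f (at x))"
    using assms frechet_derivative_works has_derivative_linear by blast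
  then have "frechet_derivative f (at x) (\<Sum>i\<in>UNIV. axis i 1) = (\<Sum>i\<in>UNIV. pd i f x)"
    unfolding pd_def by (rule linear_sum)
  moreover have "(\<Sum>i\<in>UNIV. axis i 1) = (1 :: real^'n)"
    by (simp add: vec_eq_iff axis_def)
  ultimately show ?thesis
    by simp
qed

lemma integral_diagonal_energy_nonneg:
  fixes f :: "real^'n::{finite,enum} \<Rightarrow> real"
  assumes "Cb_inf f" and "compact (closure {x. f x \<noteq> 0})" and "c > 0"
  shows "0 \<le> (\<integral>x. (c * (\<Sum>i\<in>UNIV. pd i f x)^2 + (\<Sum>k\<in>UNIV. 3 * (x$k)^2 - 1) * (f x)^2)
                  * exp (- V \<mu> x / c) \<partial>lborel)"
proof (rule integral_directional_energy_nonneg[where u = 1 and a = "\<lambda>x. \<Sum>k\<in>UNIV. (x$k)^3 - x$k",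
      OF \<open>c > 0\<close> assms(2) _ _ Cb_inf_imp_C1(1)[OF assms(1)] _ continuous_on_V])
  note C1 = Cb_inf_imp_C1[OF assms(1)]
  show "f x = 0" if "x \<notin> closure {x. f x \<noteq> 0}" for x
    using that by (meson closure_subset mem_Collect_eq subsetD)
  show "(\<Sum>i\<in>UNIV. pd i f x) = 0" if "x \<notin> closure {x. f x \<noteq> 0}" for x
    using pd_eq_0_outside_closure_support[OF assms(1) that] by simp
  show "continuous_on UNIV (\<lambda>x. \<Sum>i\<in>UNIV. pd i f x)"
    by (intro continuous_intros C1)
  show "((\<lambda>s. f (x + s *\<^sub>R 1)) has_real_derivative (\<Sum>i\<in>UNIV. pd i f (x + s *\<^sub>R 1))) (at s)" for x s
    using has_real_derivative_along_line[where u=1, OF C1(2)]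
    by (simp add: frechet_derivative_1_eq_sum_pd[OF C1(2)])
qed (intro continuous_intros V_has_derivative_along_diagonal
    sum_cube_minus_has_derivative_along_diagonal)+

lemma diagonal_energy_density_le:
  fixes f :: "real^'n::finite \<Rightarrow> real"
  assumes "0 \<le> c" and "0 \<le> C" and "0 \<le> w"
    and support: "f x \<noteq> 0 \<Longrightarrow> 3 * (\<Sum>k\<in>UNIV. (x$k)^2) \<le> real CARD('n) * (1 - 2 * C)"
  shows "(c * (\<Sum>i\<in>UNIV. pd i f x)^2 + (\<Sum>k\<in>UNIV. 3 * (x$k)^2 - 1) * (f x)^2) * w
           \<le> real CARD('n) * (c * (grad_sq f x * w) - C * ((f x)^2 * w))"
proof -
  define N where "N = real CARD('n)"
  have "(\<Sum>i\<in>UNIV. pd i f x)^2 \<le> N * grad_sq f x"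
    using sum_squared_le_sum_of_squares[of "\<lambda>i. pd i f x" UNIV]
    by (simp add: grad_sq_def N_def mult.commute)
  then have "c * (\<Sum>i\<in>UNIV. pd i f x)^2 \<le> c * (N * grad_sq f x)"
    using \<open>0 \<le> c\<close> by (rule mult_left_mono)
  moreover have "(\<Sum>k\<in>UNIV. 3 * (x$k)^2 - 1) * (f x)^2 \<le> - N * C * (f x)^2"
  proof (cases "f x = 0")
    case False
    have "(\<Sum>k\<in>UNIV. 3 * (x$k)^2 - 1) = 3 * (\<Sum>k\<in>UNIV. (x$k)^2) - N"
      by (simp add: sum_subtractf sum_distrib_left N_def)
    moreover have "3 * (\<Sum>k\<in>UNIV. (x$k)^2) \<le> N - 2 * (N * C)"
      using support[OF False] by (simp add: N_def algebra_simps)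
    moreover have "0 \<le> N * C"
      using \<open>0 \<le> C\<close> by (simp add: N_def)
    ultimately have "(\<Sum>k\<in>UNIV. 3 * (x$k)^2 - 1) \<le> - N * C"
      by linarith
    then show ?thesis
      by (rule mult_right_mono) simp
  qed simp
  ultimately have "c * (\<Sum>i\<in>UNIV. pd i f x)^2 + (\<Sum>k\<in>UNIV. 3 * (x$k)^2 - 1) * (f x)^2
      \<le> N * (c * grad_sq f x - C * (f x)^2)"
    by (simp add: algebra_simps)
  from mult_right_mono[OF this \<open>0 \<le> w\<close>] show ?thesis
    by (simp add: N_def algebra_simps)
qed

lemma diagonal_energy_bound:
  fixes f :: "real^'n::{finite,enum} \<Rightarrow> real"
  assumes "Cb_inf f" and "compact (closure {x. f x \<noteq> 0})" and "c > 0" and "C \<ge> 0"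
    and support: "\<And>x. f x \<noteq> 0 \<Longrightarrow> 3 * (\<Sum>k\<in>UNIV. (x$k)^2) \<le> real CARD('n) * (1 - 2 * C)"
  shows "C * (\<integral>x. (f x)^2 * exp (- V \<mu> x / c) \<partial>lborel)
           \<le> c * (\<integral>x. grad_sq f x * exp (- V \<mu> x / c) \<partial>lborel)"
proof -
  define w where "w x = exp (- V \<mu> x / c)" for x :: "real^'n::{finite,enum}"
  define K where "K = closure {x. f x \<noteq> 0}"
  note C1 = Cb_inf_imp_C1[OF \<open>Cb_inf f\<close>]
  have f0: "f x = 0" if "x \<notin> K" for x
    using that unfolding K_def by (meson closure_subset mem_Collect_eq subsetD)
  have pd0: "pd i f x = 0" if "x \<notin> K" for i x
    using pd_eq_0_outside_closure_support[OF \<open>Cb_inf f\<close>] that by (simp add: K_def)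
  have integrable: "integrable lborel (\<lambda>x. g x * w x)"
    if "continuous_on UNIV g" and "\<And>x. x \<notin> K \<Longrightarrow> g x = 0" for g
    using \<open>c > 0\<close> that assms(2)
    by (intro integrable_continuous_compact_support[where K = K])
      (auto simp: w_def K_def intro!: continuous_intros continuous_on_V)
  have int_grad: "integrable lborel (\<lambda>x. grad_sq f x * w x)"
    unfolding grad_sq_def by (rule integrable) (auto simp: pd0 intro!: continuous_intros C1)
  have int_f: "integrable lborel (\<lambda>x. (f x)^2 * w x)"
    by (rule integrable) (auto simp: f0 intro!: continuous_intros C1)
  have "0 \<le> (\<integral>x. (c * (\<Sum>i\<in>UNIV. pd i f x)^2 + (\<Sum>k\<in>UNIV. 3 * (x$k)^2 - 1) * (f x)^2) * w x \<partial>lborel)"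
    unfolding w_def by (rule integral_diagonal_energy_nonneg[OF assms(1-3)])
  also have "\<dots> \<le> (\<integral>x. real CARD('n) * (c * (grad_sq f x * w x) - C * ((f x)^2 * w x)) \<partial>lborel)"
  proof (rule integral_mono)
    show "integrable lborel (\<lambda>x. (c * (\<Sum>i\<in>UNIV. pd i f x)^2 + (\<Sum>k\<in>UNIV. 3 * (x$k)^2 - 1) * (f x)^2) * w x)"
      by (rule integrable) (auto simp: f0 pd0 intro!: continuous_intros C1)
    show "integrable lborel (\<lambda>x. real CARD('n) * (c * (grad_sq f x * w x) - C * ((f x)^2 * w x)))"
      using int_grad int_f by simp
    show "(c * (\<Sum>i\<in>UNIV. pd i f x)^2 + (\<Sum>k\<in>UNIV. 3 * (x$k)^2 - 1) * (f x)^2) * w x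
        \<le> real CARD('n) * (c * (grad_sq f x * w x) - C * ((f x)^2 * w x))" for x
      using \<open>c > 0\<close> \<open>C \<ge> 0\<close> support
      by (intro diagonal_energy_density_le) (auto simp: w_def)
  qed
  also have "\<dots> = real CARD('n) * (c * (\<integral>x. grad_sq f x * w x \<partial>lborel) - C * (\<integral>x. (f x)^2 * w x \<partial>lborel))"
    using int_grad int_f by simp
  finally show ?thesis
    by (simp add: w_def zero_le_mult_iff)
qed

theorem proposition5p11:
  fixes \<mu> \<delta> C h :: real and f :: "real^'n::{finite,enum} \<Rightarrow> real"
  assumes "\<mu> > 1" and "\<delta> > 0" and "C > 0" and "C < \<delta>^2" and "\<delta>^2 < 1/2"
    and "h > 0"
    and "Cb_inf f"
    and "closure {x. f x \<noteq> 0} \<subseteq>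
           Omega0 (sqrt (2/3 * (\<delta>^2 - C))) (sqrt ((1 - 2 * \<delta>^2) / 3))"
  shows "energy \<mu> h f \<ge> C * (\<integral>x. (f x)^2 * exp (- V \<mu> x / (h * real CARD('n))) \<partial>lborel)"
proof -
  have "compact (closure {x. f x \<noteq> 0})"
    using bounded_subset[OF bounded_Omega0 assms(8)] by (simp add: compact_eq_bounded_closed)
  moreover have "3 * (\<Sum>k\<in>UNIV. (x$k)^2) \<le> real CARD('n) * (1 - 2 * C)" if "f x \<noteq> 0" for x
  proof -
    have "x \<in> closure {x. f x \<noteq> 0}"
      using that closure_subset by (meson mem_Collect_eq subsetD)
    then show ?thesis
      by (rule sum_sq_le_of_mem_Omega0_R_r[OF assms(4,5) subsetD[OF assms(8)]])
  qed
  ultimately have "C * (\<integral>x. (f x)^2 * exp (- V \<mu> x / (h * real CARD('n))) \<partial>lborel)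
      \<le> h * real CARD('n) * (\<integral>x. grad_sq f x * exp (- V \<mu> x / (h * real CARD('n))) \<partial>lborel)"
    using \<open>h > 0\<close> \<open>C > 0\<close> by (intro diagonal_energy_bound \<open>Cb_inf f\<close>) auto
  then show ?thesis
    by (simp add: energy_def)
qed

end
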